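(* Let $b$ and $n\ge 2$ be positive integers and let $h(x)=h_{n-2}x^{n-2}+\cdots+h_1x+h_0$ be a polynomial with complex coefficients of degree at most $n-2$. Define the numbers $h_i'$ ($i\ge 0$) by \[ \Phi_b\left(\frac{h(x)}{(1-x)^n}\right)=\frac{\sum_{i\ge 0}h_i' x^i}{(1-x)^n}. \] Then for every $i\ge 0$, \[ h_i' = b^{n-1}\sum_{j=0}^{n-2} K_b(j,i)\,h_j, \] where $K_b$ is the transition matrix of the base $b$ carries chain for the addition of $n-1$ numbers.
   Context: Let $\mathcal{R}$ be the space of rational functions in $x$ with complex coefficients. Every $R\in\mathcal{R}$ has a Laurent expansion at $x=0$, $R(x)=\sum_{n\gg-\infty} a_n x^n$ (only finitely many nonzero coefficients with negative index). For a positive integer $b$, the map $\Phi_b:\mathcal{R}\to\mathcal{R}$ is defined by $\Phi_b(R(x))=\sum_{n\gg -\infty} a_{bn+(b-1)}x^n$. The base $b$ carries chain for the addition of $m$ numbers: when $m$ numbers are added in base $b$ with all digits chosen independently and uniformly from $\{0,1,\dots,b-1\}$, the successive carries (working from the right, starting from carry $0$) form a Markov chain; if the current carry is $c$ and the digits in the next column are $y_1,\dots,y_m$, the next carry is $\lfloor (c+y_1+\cdots+y_m)/b\rfloor$. Its transition matrix is \[ K_b(c,d)=\frac{1}{b^m}\,\#\{(y_1,\dots,y_m)\in\{0,\dots,b-1\}^m : \lfloor (c+y_1+\cdots+y_m)/b\rfloor = d\} \] for nonnegative integers $c,d$ (here $m=n-1$, and for carries $c\le n-2$ one has $K_b(c,d)=0$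 whenever $d\ge n-1$). *)

theory Defs
  imports "HOL-Computational_Algebra.Computational_Algebra"
begin

text \<open>The operator Phi_b acting on (the expansion at 0 of) a rational function that is
  regular at 0, i.e. a formal power series: the coefficient of x^n in the result is the
  coefficient of x^(b n + (b-1)) in the input.  (Indices b n + b - 1 with n < 0 are
  negative, where the expansion has zero coefficients, so the result is again a power series.)\<close>
definition Phi :: "nat \<Rightarrow> 'a fps \<Rightarrow> 'a fps" where
  "Phi b f = Abs_fps (\<lambda>k. fps_nth f (b * k + (b - 1)))"

definition carries_K :: "nat \<Rightarrow> nat \<Rightarrow> nat \<Rightarrow> nat \<Rightarrow> real" where
  "carries_K b m c d =
     real (card {y \<in> PiE {..<m} (\<lambda>_. {..<b}). (c + (\<Sum>i<m. y i)) div b = d}) / real b ^ m"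

end

theory Submission
  imports Defs
begin

text \<open>Write D = 1 + x + ... + x^(b-1). Since Phi_b(f(x) g(x^b)) = Phi_b(f) g and
  (1 - x^b)^n = (1 - x)^n D^n, the left-hand side is Phi_b(h D^n), whose i-th coefficient is the
  coefficient of x^(b i + b - 1) in h D^n. Expanding D^n as the sum of x^(y_1 + ... + y_n) over
  digit vectors, the monomial x^j of h reaches that exponent once for every choice of
  y_1, ..., y_(n-1) whose carry floor((j + y_1 + ... + y_(n-1)) / b) equals i, the last digit y_n
  then being forced; there are b^(n-1) K_b(j, i) such choices.\<close>

lemma fps_compose_X_power_nth:
  fixes g :: "'a::comm_ring_1 fps"
  assumes "b \<ge> 1"
  shows "(g oo fps_X ^ b) $ k = (if b dvd k then g $ (k div b) else 0)"
proof -
  have "(g oo fps_X ^ b) $ k = (\<Sum>i=0..k. g $ i * (if k = b * i then 1 else 0))"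
    by (simp add: fps_compose_nth power_mult[symmetric])
  also have "\<dots> = (\<Sum>i\<in>{0..k}. if i = k div b \<and> b dvd k then g $ i else 0)"
    using assms by (intro sum.cong) auto
  also have "\<dots> = (if b dvd k then g $ (k div b) else 0)"
    by (cases "b dvd k") (auto simp: div_le_dividend)
  finally show ?thesis .
qed

lemma Phi_mult_compose_X_power:
  fixes f g :: "'a::comm_ring_1 fps"
  assumes b: "b \<ge> 1"
  shows "Phi b (f * (g oo fps_X ^ b)) = Phi b f * g"
proof (rule fps_ext)
  fix i
  define N where "N = b * i + (b - 1)"
  have multiples: "{k \<in> {0..N}. b dvd k} = (\<lambda>l. b * l) ` {0..i}"
  proof safe
    fix k assume "k \<in> {0..N}" "b dvd k"
    then obtain l where "k = b * l" "b * l < b * Suc i"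
      using b by (auto simp: N_def)
    then show "k \<in> (\<lambda>l. b * l) ` {0..i}"
      by (auto simp: less_Suc_eq_le simp del: mult_Suc_right)
  next
    fix l assume "l \<in> {0..i}"
    then show "b * l \<in> {0..N}" by (simp add: N_def trans_le_add1)
  qed auto
  have "Phi b (f * (g oo fps_X ^ b)) $ i = ((g oo fps_X ^ b) * f) $ N"
    by (simp add: Phi_def N_def mult.commute)
  also have "\<dots> = (\<Sum>k=0..N. (g oo fps_X ^ b) $ k * f $ (N - k))"
    by (rule fps_mult_nth)
  also have "\<dots> = (\<Sum>k=0..N. if b dvd k then g $ (k div b) * f $ (N - k) else 0)"
    by (intro sum.cong) (simp_all add: fps_compose_X_power_nth[OF b])
  also have "\<dots> = (\<Sum>k\<in>{k\<in>{0..N}. b dvd k}. g $ (k div b) * f $ (N - k))"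
    by (subst sum.inter_filter) auto
  also have "\<dots> = (\<Sum>l=0..i. g $ l * f $ (N - b * l))"
    unfolding multiples using b by (subst sum.reindex) (auto simp: inj_on_def)
  also have "\<dots> = (\<Sum>l=0..i. g $ l * Phi b f $ (i - l))"
    by (intro sum.cong) (auto simp: Phi_def N_def diff_mult_distrib2)
  also have "\<dots> = (Phi b f * g) $ i"
    by (simp add: fps_mult_nth mult.commute)
  finally show "Phi b (f * (g oo fps_X ^ b)) $ i = (Phi b f * g) $ i" .
qed

definition digit_fps :: "nat \<Rightarrow> 'a::comm_ring_1 fps" where
  "digit_fps b = (\<Sum>d<b. fps_X ^ d)"

lemma one_minus_X_power_eq: "1 - fps_X ^ b = (1 - fps_X) * digit_fps b"
  by (simp add: digit_fps_def one_diff_power_eq)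

lemma Phi_mult_inverse_one_minus_X_power:
  fixes f :: "'a::field fps"
  assumes "b \<ge> 1"
  shows "(1 - fps_X) ^ n * Phi b (f * inverse ((1 - fps_X) ^ n)) = Phi b (f * digit_fps b ^ n)"
proof -
  have X0: "(fps_X ^ b :: 'a fps) $ 0 = 0"
    using assms by simp
  have "(1 - fps_X) ^ n oo fps_X ^ b = (1 - fps_X ^ b :: 'a fps) ^ n"
    by (simp add: fps_compose_power[OF X0, symmetric] fps_compose_sub_distrib
        fps_X_fps_compose_startby0[OF X0])
  also have "\<dots> = (1 - fps_X) ^ n * digit_fps b ^ n"
    by (simp add: one_minus_X_power_eq power_mult_distrib)
  finally have "f * inverse ((1 - fps_X) ^ n) * ((1 - fps_X) ^ n oo fps_X ^ b) = f * digit_fps b ^ n"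
    by (simp add: mult.assoc inverse_mult_eq_1 flip: mult.assoc[of "inverse _"])
  then show ?thesis
    using Phi_mult_compose_X_power[OF assms] by (metis mult.commute)
qed

definition digit_vectors :: "nat \<Rightarrow> nat \<Rightarrow> (nat \<Rightarrow> nat) set" where
  "digit_vectors b m = PiE {..<m} (\<lambda>_. {..<b})"

lemma finite_digit_vectors [simp]: "finite (digit_vectors b m)"
  by (simp add: digit_vectors_def finite_PiE)

lemma digit_fps_power_eq_sum:
  "(digit_fps b ^ m :: 'a::comm_ring_1 fps) = (\<Sum>y\<in>digit_vectors b m. fps_X ^ (\<Sum>i<m. y i))"
proof -
  have "(digit_fps b ^ m :: 'a fps) = (\<Prod>i<m. \<Sum>d<b. fps_X ^ d)"
    by (simp add: digit_fps_def)
  also have "\<dots> = (\<Sum>y\<in>PiE {..<m} (\<lambda>_. {..<b}). \<Prod>i<m. fps_X ^ y i)"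
    by (rule prod_sum_PiE) auto
  finally show ?thesis
    by (simp add: digit_vectors_def power_sum)
qed

lemma X_power_mult_digit_fps_nth:
  assumes "b \<ge> 1"
  shows "(fps_X ^ k * digit_fps b :: 'a::comm_ring_1 fps) $ (b * d + (b - 1)) = of_bool (k div b = d)"
proof -
  have "k \<le> b * d + (b - 1) \<and> b * d + (b - 1) - k < b \<longleftrightarrow> b * d \<le> k \<and> k < b * Suc d"
    using assms by auto
  also have "\<dots> \<longleftrightarrow> k div b = d"
    using assms by (auto intro: div_nat_eqI simp: dividend_less_times_div)
  finally have window: "k \<le> b * d + (b - 1) \<and> b * d + (b - 1) - k < b \<longleftrightarrow> k div b = d" .
  have "(fps_X ^ k * digit_fps b :: 'a fps) $ (b * d + (b - 1))
      = of_bool (k \<le> b * d + (b - 1) \<and> b * d + (b - 1) - k < b)"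
    using assms by (auto simp: fps_X_power_mult_nth digit_fps_def fps_sum_nth not_less)
  with window show ?thesis
    by simp
qed

lemma card_carry_eq_nth:
  assumes "b \<ge> 1"
  shows "of_nat (card {y \<in> digit_vectors b m. (c + (\<Sum>i<m. y i)) div b = d})
       = (fps_X ^ c * digit_fps b ^ Suc m :: 'a::comm_ring_1 fps) $ (b * d + (b - 1))"
proof -
  have "(fps_X ^ c * digit_fps b ^ Suc m :: 'a fps)
      = (\<Sum>y\<in>digit_vectors b m. fps_X ^ (c + (\<Sum>i<m. y i)) * digit_fps b)"
    by (simp add: digit_fps_power_eq_sum sum_distrib_left sum_distrib_right power_add
        mult_ac)
  then show ?thesis
    by (simp only: fps_sum_nth X_power_mult_digit_fps_nth[OF assms]) (simp add: Int_def)
qed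

lemma carries_K_eq_card:
  assumes "b \<ge> 1"
  shows "real b ^ m * carries_K b m c d = card {y \<in> digit_vectors b m. (c + (\<Sum>i<m. y i)) div b = d}"
  using assms by (simp add: carries_K_def digit_vectors_def)

theorem theorem2p1:
  fixes b n :: nat and h :: "complex poly"
  assumes "b \<ge> 1" and "n \<ge> 2" and "degree h \<le> n - 2"
  shows "\<forall>i. fps_nth ((1 - fps_X) ^ n * Phi b (fps_of_poly h * inverse ((1 - fps_X) ^ n))) i
           = of_nat b ^ (n - 1) * (\<Sum>j = 0..n - 2. complex_of_real (carries_K b (n - 1) j i) * coeff h j)"
proof
  fix i
  obtain m where n: "n = Suc m"
    using assms(2) by (cases n) auto
  have h: "fps_of_poly h = (\<Sum>j\<le>n - 2. fps_const (coeff h j) * fps_X ^ j)"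
    by (subst poly_as_sum_of_monoms'[OF assms(3), symmetric]) (simp add: fps_of_poly_sum fps_of_poly_monom)
  have scaled_K: "of_nat b ^ m * complex_of_real (carries_K b m j i)
      = of_nat (card {y \<in> digit_vectors b m. (j + (\<Sum>k<m. y k)) div b = i})" for j
    using arg_cong[OF carries_K_eq_card[OF assms(1)], of complex_of_real] by simp
  have "((1 - fps_X) ^ n * Phi b (fps_of_poly h * inverse ((1 - fps_X) ^ n))) $ i
      = (fps_of_poly h * digit_fps b ^ n) $ (b * i + (b - 1))"
    unfolding Phi_mult_inverse_one_minus_X_power[OF assms(1)] by (simp add: Phi_def)
  also have "\<dots> = (\<Sum>j\<le>n - 2. coeff h j * (fps_X ^ j * digit_fps b ^ Suc m) $ (b * i + (b - 1)))"
    by (simp add: h n sum_distrib_right fps_sum_nth mult.assoc)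
  also have "\<dots> = (\<Sum>j\<le>n - 2. coeff h j *
      of_nat (card {y \<in> digit_vectors b m. (j + (\<Sum>k<m. y k)) div b = i}))"
    by (simp only: card_carry_eq_nth[OF assms(1)])
  also have "\<dots> = of_nat b ^ (n - 1) * (\<Sum>j = 0..n - 2. complex_of_real (carries_K b (n - 1) j i) * coeff h j)"
    unfolding sum_distrib_left atLeast0AtMost n diff_Suc_1
    by (intro sum.cong refl) (simp only: scaled_K[symmetric] ac_simps)
  finally show "fps_nth ((1 - fps_X) ^ n * Phi b (fps_of_poly h * inverse ((1 - fps_X) ^ n))) i
           = of_nat b ^ (n - 1) * (\<Sum>j = 0..n - 2. complex_of_real (carries_K b (n - 1) j i) * coeff h j)" .
qed

end
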